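(* Let $g_c:[0,\infty)\to[0,\infty)$ be a measurable function with $0<K:=\int_0^\infty g_c(u)\,\mathrm{d}u<\infty$. Let $V_1,V_2,R,D$ be mutually independent random variables with $\mathbb{P}(V_k=-1)=\mathbb{P}(V_k=1)=1/2$ for $k=1,2$, $D$ having PDF $f_D(d)=\frac{2}{\pi\sqrt{1-d^2}}$ for $d\in(0,1)$, and $R$ having PDF $f_R(r)=\frac{2r\,g_c(r^2)}{K}$ for $r>0$. Put $Z_1=RDV_1$ and $Z_2=R\sqrt{1-D^2}\,V_2$. Then the random vector $(Z_1,Z_2)^\top$ has a joint PDF $f_{Z_1,Z_2}$ which is jointly symmetric about $(0,0)$, i.e. $f_{Z_1,Z_2}(x,y)=f_{Z_1,Z_2}(x,-y)=f_{Z_1,Z_2}(-x,y)=f_{Z_1,Z_2}(-x,-y)$ for all real $x,y$. *)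

theory Defs
  imports "HOL-Probability.Probability"
begin

end

(*
  Write D = cos T with T uniform on (0, pi/2). The independent signs V1, V2 make
  (D V1, sqrt (1 - D^2) V2) uniform on the unit circle, so Z = (Z1, Z2) is rotation invariant
  and its density depends on x^2 + y^2 only. Concretely: given R = r, the sign V1 turns r D V1
  into an arcsine variable on (-r, r); integrating against the density 2 r g(r^2) / K of R and
  substituting r = sqrt (x^2 + y^2) shows that (Z1, |Z2|) has density 2 g(x^2 + y^2) / (pi K)
  on the upper half plane, and the sign V2 spreads it evenly over both half planes. Hence
  Z has density g(x^2 + y^2) / (pi K), which is invariant under both reflections.
*)

theory Submission
  imports Defs
begin

definition rademacher_mean :: "(real \<Rightarrow> ennreal) \<Rightarrow> ennreal" where
  "rademacher_mean F = (F (-1) + F 1) / 2"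

definition rademacher_var :: "'a measure \<Rightarrow> ('a \<Rightarrow> real) \<Rightarrow> bool" where
  "rademacher_var M V \<longleftrightarrow> V \<in> borel_measurable M
     \<and> measure M {\<omega> \<in> space M. V \<omega> = -1} = 1/2 \<and> measure M {\<omega> \<in> space M. V \<omega> = 1} = 1/2"

lemma nn_integral_rademacher:
  assumes "prob_space M" and "rademacher_var M V"
  shows "(\<integral>\<^sup>+\<omega>. F (V \<omega>) \<partial>M) = rademacher_mean F"
proof -
  interpret prob_space M by fact
  have [measurable]: "V \<in> borel_measurable M"
    and minus: "measure M {\<omega> \<in> space M. V \<omega> = -1} = 1/2"
    and plus: "measure M {\<omega> \<in> space M. V \<omega> = 1} = 1/2"
    using \<open>rademacher_var M V\<close> by (simp_all add: rademacher_var_def)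
  let ?A = "{\<omega> \<in> space M. V \<omega> = -1}" and ?B = "{\<omega> \<in> space M. V \<omega> = 1}"
  have "prob (?A \<union> ?B) = 1"
    using finite_measure_Union[of ?A ?B] minus plus by fastforce
  moreover have "?A \<union> ?B = {\<omega> \<in> space M. V \<omega> = -1 \<or> V \<omega> = 1}" by auto
  ultimately have "AE \<omega> in M. V \<omega> = -1 \<or> V \<omega> = 1"
    by (simp add: prob_Collect_eq_1)
  then have "AE \<omega> in M. F (V \<omega>) = F (-1) * indicator ?A \<omega> + F 1 * indicator ?B \<omega>"
    using AE_space by eventually_elim (auto simp: indicator_def)
  then have "(\<integral>\<^sup>+\<omega>. F (V \<omega>) \<partial>M) = (\<integral>\<^sup>+\<omega>. F (-1) * indicator ?A \<omega> + F 1 * indicator ?B \<omega> \<partial>M)"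
    by (rule nn_integral_cong_AE)
  also have "\<dots> = F (-1) * ennreal (1/2) + F 1 * ennreal (1/2)"
    by (simp add: nn_integral_add nn_integral_cmult_indicator emeasure_eq_measure minus plus
        del: ennreal_1 ennreal_divide_numeral)
  finally show ?thesis
    by (simp add: rademacher_mean_def ennreal_divide_numeral[symmetric] divide_ennreal_def
        distrib_right)
qed

lemma rademacher_mean_nn_integral:
  assumes "\<And>w. F w \<in> borel_measurable M"
  shows "(\<integral>\<^sup>+x. rademacher_mean (\<lambda>w. F w x) \<partial>M) = rademacher_mean (\<lambda>w. \<integral>\<^sup>+x. F w x \<partial>M)"
  using assms by (simp add: rademacher_mean_def nn_integral_divide nn_integral_add)

lemma rademacher_mean_cmult: "c * rademacher_mean F = rademacher_mean (\<lambda>w. c * F w)"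
  by (simp add: rademacher_mean_def ennreal_times_divide distrib_left)

lemma rademacher_mean_nn_integral_sign:
  fixes f h :: "real \<Rightarrow> ennreal"
  assumes [measurable]: "f \<in> borel_measurable borel" "h \<in> borel_measurable borel"
  shows "rademacher_mean (\<lambda>s. \<integral>\<^sup>+x. f x * h (s * x) \<partial>lborel)
       = (\<integral>\<^sup>+x. rademacher_mean (\<lambda>s. f (s * x)) * h x \<partial>lborel)"
proof -
  have "(\<integral>\<^sup>+x. f x * h (- x) \<partial>lborel) = (\<integral>\<^sup>+x. f (- x) * h x \<partial>lborel)"
    using nn_integral_real_affine[of "\<lambda>x. f (- x) * h x" "-1" 0] by simp
  moreover have "(\<integral>\<^sup>+x. (f (- x) + f x) / 2 * h x \<partial>lborel)
      = ((\<integral>\<^sup>+x. f (- x) * h x \<partial>lborel) + (\<integral>\<^sup>+x. f x * h x \<partial>lborel)) / 2"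
  proof -
    have "(\<integral>\<^sup>+x. (f (- x) + f x) / 2 * h x \<partial>lborel)
        = (\<integral>\<^sup>+x. (f (- x) * h x + f x * h x) / 2 \<partial>lborel)"
      by (simp add: divide_ennreal_def ring_distribs mult_ac)
    then show ?thesis
      by (simp add: nn_integral_divide nn_integral_add)
  qed
  ultimately show ?thesis
    by (simp add: rademacher_mean_def)
qed

lemma DERIV_nonneg_imp_mono_on_atLeast:
  fixes g g' :: "real \<Rightarrow> real"
  assumes deriv: "\<And>x. (g has_real_derivative g' x) (at x)"
    and nonneg: "\<And>x. a \<le> x \<Longrightarrow> 0 \<le> g' x"
  shows "mono_on {a..} g"
proof (rule mono_onI)
  fix s t assume "s \<in> {a..}" "t \<in> {a..}" "s \<le> t"
  show "g s \<le> g t"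
  proof (rule DERIV_nonneg_imp_increasing_open[OF \<open>s \<le> t\<close>])
    fix x assume "s < x"
    then have "0 \<le> g' x" using nonneg \<open>s \<in> {a..}\<close> by simp
    then show "\<exists>y. (g has_real_derivative y) (at x) \<and> 0 \<le> y" using deriv by blast
  qed (rule has_real_derivative_imp_continuous_on[OF deriv])
qed

lemma nn_integral_substitution_atLeast:
  fixes f :: "real \<Rightarrow> ennreal" and g g' :: "real \<Rightarrow> real"
  assumes [measurable]: "f \<in> borel_measurable borel"
    and deriv: "\<And>x. (g has_real_derivative g' x) (at x)"
    and cont: "continuous_on UNIV g'"
    and nonneg: "\<And>x. a \<le> x \<Longrightarrow> 0 \<le> g' x"
    and unbounded: "filterlim g at_top at_top"
  shows "(\<integral>\<^sup>+x. f x * indicator {g a..} x \<partial>lborel)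
       = (\<integral>\<^sup>+x. f (g x) * ennreal (g' x) * indicator {a..} x \<partial>lborel)"
proof -
  define b where "b n = a + real n + 1" for n :: nat
  have [measurable]: "g \<in> borel_measurable borel" "g' \<in> borel_measurable borel"
    using deriv cont by (auto intro!: borel_measurable_continuous_onI
        has_real_derivative_imp_continuous_on)
  have mono: "mono_on {a..} g"
    using deriv nonneg by (rule DERIV_nonneg_imp_mono_on_atLeast)
  have "g (b m) \<le> g (b n)" if "m \<le> n" for m n
    using mono_onD[OF mono, of "b m" "b n"] that by (simp add: b_def)
  then have incseq: "incseq (\<lambda>n. {g a..g (b n)})" "incseq (\<lambda>n. {a..b n})"
    by (auto simp: incseq_def b_def)
  have b_unbounded: "\<exists>n. t \<le> b n" for t
  proof -
    obtain n :: nat where "t - a \<le> real n" using real_arch_simple by blast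
    then show ?thesis unfolding b_def by (intro exI[of _ n]) simp
  qed
  have union: "(\<Union>n. {a..b n}) = {a..}"
    using b_unbounded by (auto simp: b_def)
  have image_union: "(\<Union>n. {g a..g (b n)}) = {g a..}"
  proof (intro antisym subsetI)
    fix y assume "y \<in> {g a..}"
    obtain N where "\<And>t. N \<le> t \<Longrightarrow> y \<le> g t"
      using unbounded by (auto simp: filterlim_at_top eventually_at_top_linorder)
    with b_unbounded[of N] \<open>y \<in> {g a..}\<close> show "y \<in> (\<Union>n. {g a..g (b n)})" by auto
  qed auto
  have finite_substitution: "emeasure (density lborel f) {g a..g (b n)}
      = emeasure (density lborel (\<lambda>x. f (g x) * ennreal (g' x))) {a..b n}" for n
  proof -
    have "(\<integral>\<^sup>+x. f x * indicator {g a..g (b n)} x \<partial>lborel)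
        = (\<integral>\<^sup>+x. f (g x) * ennreal (g' x) * indicator {a..b n} x \<partial>lborel)"
      using deriv nonneg
      by (intro nn_integral_substitution_aux)
        (auto simp: b_def intro: continuous_on_subset[OF cont])
    then show ?thesis by (simp add: emeasure_density)
  qed
  have "emeasure (density lborel f) {g a..} = (SUP n. emeasure (density lborel f) {g a..g (b n)})"
    unfolding image_union[symmetric] using incseq by (intro SUP_emeasure_incseq[symmetric]) auto
  also have "\<dots> = (SUP n. emeasure (density lborel (\<lambda>x. f (g x) * ennreal (g' x))) {a..b n})"
    by (simp only: finite_substitution)
  also have "\<dots> = emeasure (density lborel (\<lambda>x. f (g x) * ennreal (g' x))) {a..}"
    unfolding union[symmetric] using incseq by (intro SUP_emeasure_incseq) auto
  finally show ?thesis
    by (simp add: emeasure_density)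
qed

lemma nn_integral_substitution_hypot:
  fixes \<phi> :: "real \<Rightarrow> ennreal" and a :: real
  assumes [measurable]: "\<phi> \<in> borel_measurable borel" and "a \<noteq> 0"
  shows "(\<integral>\<^sup>+r. \<phi> r * indicator {\<bar>a\<bar>..} r \<partial>lborel)
       = (\<integral>\<^sup>+y. \<phi> (sqrt (a\<^sup>2 + y\<^sup>2)) * ennreal (y / sqrt (a\<^sup>2 + y\<^sup>2)) * indicator {0..} y \<partial>lborel)"
proof -
  have pos: "0 < a\<^sup>2 + y\<^sup>2" for y
    using \<open>a \<noteq> 0\<close> by (simp add: add_pos_nonneg)
  have deriv: "((\<lambda>y. sqrt (a\<^sup>2 + y\<^sup>2)) has_real_derivative y / sqrt (a\<^sup>2 + y\<^sup>2)) (at y)" for y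
    using pos[of y] by (auto intro!: derivative_eq_intros simp: field_simps power2_eq_square)
  have cont: "continuous_on UNIV (\<lambda>y. y / sqrt (a\<^sup>2 + y\<^sup>2))"
    using \<open>a \<noteq> 0\<close> by (intro continuous_intros) simp
  have nonneg: "0 \<le> y / sqrt (a\<^sup>2 + y\<^sup>2)" if "0 \<le> y" for y
    using that by simp
  have unbounded: "filterlim (\<lambda>y. sqrt (a\<^sup>2 + y\<^sup>2)) at_top at_top"
    by (rule filterlim_at_top_mono[OF filterlim_ident]) (simp add: abs_le_D1)
  have "sqrt (a\<^sup>2 + 0\<^sup>2) = \<bar>a\<bar>"
    by simp
  with nn_integral_substitution_atLeast[where a=0, OF assms(1) deriv cont nonneg unbounded]
  show ?thesis
    by simp
qed

definition half_arcsine_density :: "real \<Rightarrow> real" where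
  "half_arcsine_density d = (if 0 < d \<and> d < 1 then 2 / (pi * sqrt (1 - d\<^sup>2)) else 0)"

lemma borel_measurable_half_arcsine_density [measurable]:
  "half_arcsine_density \<in> borel_measurable borel"
  unfolding half_arcsine_density_def by measurable

definition radial_density :: "(real \<Rightarrow> real) \<Rightarrow> real \<Rightarrow> real" where
  "radial_density q r = (if 0 < r then 2 * r * q (r\<^sup>2) else 0)"

lemma borel_measurable_radial_density [measurable]:
  assumes [measurable]: "q \<in> borel_measurable borel"
  shows "radial_density q \<in> borel_measurable borel"
  unfolding radial_density_def by measurable

definition arcsine_density :: "real \<Rightarrow> real \<Rightarrow> real" where
  "arcsine_density r x = (if \<bar>x\<bar> < r then 1 / (pi * sqrt (r\<^sup>2 - x\<^sup>2)) else 0)"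

lemma arcsine_density_nonneg: "0 \<le> arcsine_density r x"
proof -
  have "0 \<le> sqrt (r\<^sup>2 - x\<^sup>2)" if "\<bar>x\<bar> < r"
    using that power_strict_mono[of "\<bar>x\<bar>" r 2] by simp
  then show ?thesis by (simp add: arcsine_density_def)
qed

lemma sqrt_diff_square_scale:
  fixes r x :: real
  assumes "0 \<le> r"
  shows "sqrt (r\<^sup>2 - (r * x)\<^sup>2) = r * sqrt (1 - x\<^sup>2)"
proof -
  have "r\<^sup>2 - (r * x)\<^sup>2 = r\<^sup>2 * (1 - x\<^sup>2)"
    by (simp add: power_mult_distrib algebra_simps)
  then show ?thesis
    using assms by (simp add: real_sqrt_mult)
qed

lemma arcsine_density_scale:
  assumes "0 < r"
  shows "r * arcsine_density r (r * x) = arcsine_density 1 x"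
  using assms by (simp add: arcsine_density_def sqrt_diff_square_scale abs_mult)

lemma rademacher_mean_half_arcsine_density:
  assumes "d \<noteq> 0"
  shows "rademacher_mean (\<lambda>v. ennreal (half_arcsine_density (v * d)))
       = ennreal (arcsine_density 1 d)"
proof -
  have "0 < 1 - d\<^sup>2" if "\<bar>d\<bar> < 1"
    using that by (simp add: abs_square_less_1)
  with assms show ?thesis
    by (cases "d < 0"; cases "\<bar>d\<bar> < 1")
      (simp_all add: rademacher_mean_def half_arcsine_density_def arcsine_density_def
        ennreal_divide_numeral)
qed

lemma rademacher_mean_half_arcsine:
  fixes k :: "real \<times> real \<Rightarrow> ennreal" and r :: real
  assumes [measurable]: "k \<in> borel_measurable (borel \<Otimes>\<^sub>M borel)" and r: "0 < r"
  shows "rademacher_mean (\<lambda>v. \<integral>\<^sup>+d. ennreal (half_arcsine_density d)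
                                  * k (r * d * v, r * sqrt (1 - d\<^sup>2)) \<partial>lborel)
       = (\<integral>\<^sup>+x. ennreal (arcsine_density r x) * k (x, sqrt (r\<^sup>2 - x\<^sup>2)) \<partial>lborel)"
proof -
  define F where "F x = ennreal (arcsine_density r x) * k (x, sqrt (r\<^sup>2 - x\<^sup>2))" for x
  have [measurable]: "F \<in> borel_measurable borel"
    unfolding F_def arcsine_density_def by measurable
  have pointwise: "rademacher_mean (\<lambda>v. ennreal (half_arcsine_density (v * d)))
      * k (r * d, r * sqrt (1 - d\<^sup>2)) = ennreal r * F (r * d)" if "d \<noteq> 0" for d
  proof -
    have "ennreal r * ennreal (arcsine_density r (r * d)) = ennreal (arcsine_density 1 d)"
      using r arcsine_density_nonneg by (simp add: ennreal_mult'[symmetric] arcsine_density_scale)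
    then show ?thesis
      using that r
      by (simp add: F_def rademacher_mean_half_arcsine_density sqrt_diff_square_scale
          mult.assoc[symmetric])
  qed
  have "rademacher_mean (\<lambda>v. \<integral>\<^sup>+d. ennreal (half_arcsine_density d)
                              * k (r * d * v, r * sqrt (1 - d\<^sup>2)) \<partial>lborel)
      = rademacher_mean (\<lambda>v. \<integral>\<^sup>+d. ennreal (half_arcsine_density d)
                              * k (r * (v * d), r * sqrt (1 - (v * d)\<^sup>2)) \<partial>lborel)"
    by (simp add: rademacher_mean_def)
  also have "\<dots> = (\<integral>\<^sup>+d. rademacher_mean (\<lambda>v. ennreal (half_arcsine_density (v * d)))
                              * k (r * d, r * sqrt (1 - d\<^sup>2)) \<partial>lborel)"
    by (rule rademacher_mean_nn_integral_sign) simp_all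
  also have "\<dots> = (\<integral>\<^sup>+d. ennreal r * F (r * d) \<partial>lborel)"
    by (rule nn_integral_cong_AE, rule AE_mp[OF AE_lborel_singleton[of 0]]) (simp add: pointwise)
  also have "\<dots> = (\<integral>\<^sup>+x. F x \<partial>lborel)"
    using nn_integral_real_affine[of F r 0] r by (simp add: nn_integral_cmult)
  finally show ?thesis
    by (simp add: F_def)
qed

lemma arcsine_density_hypot:
  assumes "0 < y"
  shows "arcsine_density (sqrt (x\<^sup>2 + y\<^sup>2)) x = 1 / (pi * y)"
proof -
  have "x\<^sup>2 < x\<^sup>2 + y\<^sup>2"
    using assms by simp
  then have "\<bar>x\<bar> < sqrt (x\<^sup>2 + y\<^sup>2)"
    using real_sqrt_less_mono by (metis real_sqrt_abs)
  with assms show ?thesis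
    by (simp add: arcsine_density_def)
qed

lemma nn_integral_radial_arcsine:
  fixes q :: "real \<Rightarrow> real" and k :: "real \<Rightarrow> ennreal" and x :: real
  assumes [measurable]: "q \<in> borel_measurable borel" "k \<in> borel_measurable borel"
    and q_nonneg: "\<And>u. 0 \<le> q u" and "x \<noteq> 0"
  shows "(\<integral>\<^sup>+r. ennreal (radial_density q r) * ennreal (arcsine_density r x)
                * k (sqrt (r\<^sup>2 - x\<^sup>2)) \<partial>lborel)
       = (\<integral>\<^sup>+y. ennreal (2 * q (x\<^sup>2 + y\<^sup>2) / pi) * indicator {0<..} y * k y \<partial>lborel)"
proof -
  define \<phi> where "\<phi> r = ennreal (radial_density q r) * ennreal (arcsine_density r x)
                * k (sqrt (r\<^sup>2 - x\<^sup>2))" for r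
  have [measurable]: "\<phi> \<in> borel_measurable borel"
    unfolding \<phi>_def arcsine_density_def by measurable
  have support: "\<phi> r = \<phi> r * indicator {\<bar>x\<bar>..} r" for r
    by (simp add: \<phi>_def arcsine_density_def indicator_def)
  \<comment> \<open>The Jacobian y / r of r = sqrt (x^2 + y^2) cancels the singularity 1 / (pi y)
    of the arcsine density.\<close>
  have substituted: "\<phi> (sqrt (x\<^sup>2 + y\<^sup>2)) * ennreal (y / sqrt (x\<^sup>2 + y\<^sup>2)) * indicator {0..} y
      = ennreal (2 * q (x\<^sup>2 + y\<^sup>2) / pi) * indicator {0<..} y * k y" for y
  proof (cases "0 < y")
    case True
    define \<rho> where "\<rho> = sqrt (x\<^sup>2 + y\<^sup>2)"
    have \<rho>: "0 < \<rho>" "\<rho>\<^sup>2 = x\<^sup>2 + y\<^sup>2" "sqrt (\<rho>\<^sup>2 - x\<^sup>2) = y"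
      using True by (auto simp: \<rho>_def add_nonneg_pos)
    have "2 * \<rho> * q (x\<^sup>2 + y\<^sup>2) * (1 / (pi * y)) * (y / \<rho>) = 2 * q (x\<^sup>2 + y\<^sup>2) / pi"
      using \<rho> True by (simp add: field_simps)
    then have "ennreal (2 * \<rho> * q (x\<^sup>2 + y\<^sup>2)) * ennreal (1 / (pi * y)) * ennreal (y / \<rho>)
        = ennreal (2 * q (x\<^sup>2 + y\<^sup>2) / pi)"
      using \<rho> True q_nonneg by (simp add: ennreal_mult[symmetric])
    moreover have "\<phi> \<rho> * ennreal (y / \<rho>)
        = ennreal (2 * \<rho> * q (x\<^sup>2 + y\<^sup>2)) * ennreal (1 / (pi * y)) * ennreal (y / \<rho>) * k y"
      using \<rho> True by (simp add: \<phi>_def \<rho>_def radial_density_def arcsine_density_hypot mult_ac)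
    ultimately show ?thesis
      using True by (simp add: \<rho>_def indicator_def)
  qed (auto simp: indicator_def)
  have "(\<integral>\<^sup>+r. \<phi> r \<partial>lborel) = (\<integral>\<^sup>+r. \<phi> r * indicator {\<bar>x\<bar>..} r \<partial>lborel)"
    by (intro nn_integral_cong support)
  also have "\<dots> = (\<integral>\<^sup>+y. \<phi> (sqrt (x\<^sup>2 + y\<^sup>2)) * ennreal (y / sqrt (x\<^sup>2 + y\<^sup>2)) * indicator {0..} y
      \<partial>lborel)"
    using \<open>x \<noteq> 0\<close> by (rule nn_integral_substitution_hypot[rotated]) measurable
  also have "\<dots> = (\<integral>\<^sup>+y. ennreal (2 * q (x\<^sup>2 + y\<^sup>2) / pi) * indicator {0<..} y * k y \<partial>lborel)"
    by (simp only: substituted)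
  finally show ?thesis
    by (simp only: \<phi>_def)
qed

lemma nn_integral_radial_upper_half_plane:
  fixes q :: "real \<Rightarrow> real" and k :: "real \<times> real \<Rightarrow> ennreal"
  assumes [measurable]: "q \<in> borel_measurable borel" "k \<in> borel_measurable (borel \<Otimes>\<^sub>M borel)"
    and q_nonneg: "\<And>u. 0 \<le> q u"
  shows "(\<integral>\<^sup>+r. ennreal (radial_density q r)
                * (\<integral>\<^sup>+x. ennreal (arcsine_density r x) * k (x, sqrt (r\<^sup>2 - x\<^sup>2)) \<partial>lborel) \<partial>lborel)
       = (\<integral>\<^sup>+x. \<integral>\<^sup>+y. ennreal (2 * q (x\<^sup>2 + y\<^sup>2) / pi) * indicator {0<..} y * k (x, y) \<partial>lborel \<partial>lborel)"
proof -
  have "(\<integral>\<^sup>+r. ennreal (radial_density q r)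
                * (\<integral>\<^sup>+x. ennreal (arcsine_density r x) * k (x, sqrt (r\<^sup>2 - x\<^sup>2)) \<partial>lborel) \<partial>lborel)
      = (\<integral>\<^sup>+x. \<integral>\<^sup>+r. ennreal (radial_density q r) * ennreal (arcsine_density r x)
                * k (x, sqrt (r\<^sup>2 - x\<^sup>2)) \<partial>lborel \<partial>lborel)"
    by (simp add: nn_integral_cmult[symmetric] mult.assoc arcsine_density_def)
      (rule lborel_pair.Fubini', measurable)
  also have "\<dots> = (\<integral>\<^sup>+x. \<integral>\<^sup>+y. ennreal (2 * q (x\<^sup>2 + y\<^sup>2) / pi) * indicator {0<..} y * k (x, y)
      \<partial>lborel \<partial>lborel)"
  proof (rule nn_integral_cong_AE, rule AE_mp[OF AE_lborel_singleton[of 0]], intro AE_I2 impI)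
    fix x :: real assume "x \<noteq> 0"
    have "(\<lambda>y. k (x, y)) \<in> borel_measurable borel" by measurable
    with \<open>x \<noteq> 0\<close> show "(\<integral>\<^sup>+r. ennreal (radial_density q r) * ennreal (arcsine_density r x)
                * k (x, sqrt (r\<^sup>2 - x\<^sup>2)) \<partial>lborel)
      = (\<integral>\<^sup>+y. ennreal (2 * q (x\<^sup>2 + y\<^sup>2) / pi) * indicator {0<..} y * k (x, y) \<partial>lborel)"
      using nn_integral_radial_arcsine[of q "\<lambda>y. k (x, y)" x] q_nonneg by simp
  qed
  finally show ?thesis .
qed

lemma rademacher_mean_upper_half_plane:
  fixes q :: "real \<Rightarrow> real" and h :: "real \<times> real \<Rightarrow> ennreal"
  assumes [measurable]: "q \<in> borel_measurable borel" "h \<in> borel_measurable (borel \<Otimes>\<^sub>M borel)"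
    and q_nonneg: "\<And>u. 0 \<le> q u"
  shows "rademacher_mean (\<lambda>w. \<integral>\<^sup>+x. \<integral>\<^sup>+y. ennreal (2 * q (x\<^sup>2 + y\<^sup>2) / pi) * indicator {0<..} y
                                        * h (x, w * y) \<partial>lborel \<partial>lborel)
       = (\<integral>\<^sup>+p. ennreal (q ((fst p)\<^sup>2 + (snd p)\<^sup>2) / pi) * h p \<partial>(lborel \<Otimes>\<^sub>M lborel))"
proof -
  define f where "f x y = ennreal (2 * q (x\<^sup>2 + y\<^sup>2) / pi) * indicator {0<..} y" for x y
  have [measurable]: "(\<lambda>(x, y). f x y) \<in> borel_measurable (borel \<Otimes>\<^sub>M borel)"
    unfolding f_def by measurable
  have symmetrized: "rademacher_mean (\<lambda>s. f x (s * y)) = ennreal (q (x\<^sup>2 + y\<^sup>2) / pi)"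
    if "y \<noteq> 0" for x y
    using that q_nonneg[of "x\<^sup>2 + y\<^sup>2"]
    by (cases "y < 0")
      (simp_all add: rademacher_mean_def f_def indicator_def ennreal_divide_numeral)
  have "rademacher_mean (\<lambda>w. \<integral>\<^sup>+x. \<integral>\<^sup>+y. f x y * h (x, w * y) \<partial>lborel \<partial>lborel)
      = (\<integral>\<^sup>+x. rademacher_mean (\<lambda>w. \<integral>\<^sup>+y. f x y * h (x, w * y) \<partial>lborel) \<partial>lborel)"
    by (rule rademacher_mean_nn_integral[symmetric]) measurable
  also have "\<dots> = (\<integral>\<^sup>+x. \<integral>\<^sup>+y. rademacher_mean (\<lambda>s. f x (s * y)) * h (x, y) \<partial>lborel \<partial>lborel)"
    by (intro nn_integral_cong rademacher_mean_nn_integral_sign) measurable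
  also have "\<dots> = (\<integral>\<^sup>+x. \<integral>\<^sup>+y. ennreal (q (x\<^sup>2 + y\<^sup>2) / pi) * h (x, y) \<partial>lborel \<partial>lborel)"
    by (intro nn_integral_cong nn_integral_cong_AE, rule AE_mp[OF AE_lborel_singleton[of 0]])
      (simp add: symmetrized)
  also have "\<dots> = (\<integral>\<^sup>+p. ennreal (q ((fst p)\<^sup>2 + (snd p)\<^sup>2) / pi) * h p \<partial>(lborel \<Otimes>\<^sub>M lborel))"
  proof -
    have "(\<lambda>p. ennreal (q ((fst p)\<^sup>2 + (snd p)\<^sup>2) / pi) * h p) \<in> borel_measurable (lborel \<Otimes>\<^sub>M lborel)"
      by measurable
    then show ?thesis by (simp add: lborel.nn_integral_fst[symmetric])
  qed
  finally show ?thesis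
    by (simp add: f_def)
qed

lemma nn_integral_random_polar_vector:
  fixes q :: "real \<Rightarrow> real" and h :: "real \<times> real \<Rightarrow> ennreal"
  assumes [measurable]: "q \<in> borel_measurable borel" "h \<in> borel_measurable (borel \<Otimes>\<^sub>M borel)"
    and q_nonneg: "\<And>u. 0 \<le> q u"
  shows "(\<integral>\<^sup>+r. ennreal (radial_density q r)
            * rademacher_mean (\<lambda>w. rademacher_mean (\<lambda>v.
                \<integral>\<^sup>+d. ennreal (half_arcsine_density d)
                    * h (r * d * v, r * sqrt (1 - d\<^sup>2) * w) \<partial>lborel)) \<partial>lborel)
       = (\<integral>\<^sup>+p. ennreal (q ((fst p)\<^sup>2 + (snd p)\<^sup>2) / pi) * h p \<partial>(lborel \<Otimes>\<^sub>M lborel))"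
proof -
  define fR where "fR r = ennreal (radial_density q r)" for r
  define A where "A w r = (\<integral>\<^sup>+x. ennreal (arcsine_density r x) * h (x, w * sqrt (r\<^sup>2 - x\<^sup>2)) \<partial>lborel)"
    for w r
  have [measurable]: "(\<lambda>r. fR r * A w r) \<in> borel_measurable borel" for w
    unfolding fR_def A_def arcsine_density_def by measurable
  have arcsine: "rademacher_mean (\<lambda>v.
                \<integral>\<^sup>+d. ennreal (half_arcsine_density d)
                    * h (r * d * v, r * sqrt (1 - d\<^sup>2) * w) \<partial>lborel) = A w r" if "0 < r" for r w
    using rademacher_mean_half_arcsine[of "\<lambda>(a, b). h (a, w * b)" r] that
    by (simp add: A_def mult.commute)
  have "(\<integral>\<^sup>+r. fR r * rademacher_mean (\<lambda>w. rademacher_mean (\<lambda>v.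
                \<integral>\<^sup>+d. ennreal (half_arcsine_density d)
                    * h (r * d * v, r * sqrt (1 - d\<^sup>2) * w) \<partial>lborel)) \<partial>lborel)
      = (\<integral>\<^sup>+r. rademacher_mean (\<lambda>w. fR r * A w r) \<partial>lborel)"
  proof (intro nn_integral_cong)
    fix r :: real
    show "fR r * rademacher_mean (\<lambda>w. rademacher_mean (\<lambda>v.
                \<integral>\<^sup>+d. ennreal (half_arcsine_density d)
                    * h (r * d * v, r * sqrt (1 - d\<^sup>2) * w) \<partial>lborel))
        = rademacher_mean (\<lambda>w. fR r * A w r)"
      by (cases "0 < r") (simp_all only: arcsine rademacher_mean_cmult,
          simp add: fR_def radial_density_def rademacher_mean_def)
  qed
  also have "\<dots> = rademacher_mean (\<lambda>w. \<integral>\<^sup>+r. fR r * A w r \<partial>lborel)"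
    by (rule rademacher_mean_nn_integral) measurable
  also have "\<dots> = rademacher_mean (\<lambda>w. \<integral>\<^sup>+x. \<integral>\<^sup>+y. ennreal (2 * q (x\<^sup>2 + y\<^sup>2) / pi) * indicator {0<..} y
                                        * h (x, w * y) \<partial>lborel \<partial>lborel)"
    using nn_integral_radial_upper_half_plane[of q "\<lambda>(a, b). h (a, w * b)" for w] q_nonneg
    by (simp add: fR_def A_def)
  also have "\<dots> = (\<integral>\<^sup>+p. ennreal (q ((fst p)\<^sup>2 + (snd p)\<^sup>2) / pi) * h p \<partial>(lborel \<Otimes>\<^sub>M lborel))"
    by (rule rademacher_mean_upper_half_plane) (simp_all add: q_nonneg)
  finally show ?thesis
    by (simp only: fR_def)
qed

lemma (in prob_space) nn_integral_indep_vars_4: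
  fixes X :: "nat \<Rightarrow> 'a \<Rightarrow> real" and F :: "real \<times> real \<times> real \<times> real \<Rightarrow> ennreal"
  assumes indep: "indep_vars (\<lambda>_. borel) X {0, 1, 2, 3}"
    and X_rv: "\<And>i. random_variable borel (X i)"
    and [measurable]: "F \<in> borel_measurable (borel \<Otimes>\<^sub>M borel \<Otimes>\<^sub>M borel \<Otimes>\<^sub>M borel)"
  shows "(\<integral>\<^sup>+\<omega>. F (X 0 \<omega>, X 1 \<omega>, X 2 \<omega>, X 3 \<omega>) \<partial>M)
       = (\<integral>\<^sup>+x2. \<integral>\<^sup>+x1. \<integral>\<^sup>+x0. \<integral>\<^sup>+x3. F (x0, x1, x2, x3)
            \<partial>distr M borel (X 3) \<partial>distr M borel (X 0) \<partial>distr M borel (X 1) \<partial>distr M borel (X 2))"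
proof -
  define I where "I = insert (2::nat) (insert 1 (insert 0 {3}))"
  define \<mu> where "\<mu> = (\<lambda>i. distr M borel (X i))"
  have restrict_measurable: "(\<lambda>\<omega>. \<lambda>i\<in>I. X i \<omega>) \<in> measurable M (Pi\<^sub>M I (\<lambda>_. borel))"
    using X_rv by (intro measurable_restrict) simp
  have law: "distr M (Pi\<^sub>M I (\<lambda>_. borel)) (\<lambda>\<omega>. \<lambda>i\<in>I. X i \<omega>) = Pi\<^sub>M I \<mu>"
    using indep indep_vars_iff_distr_eq_PiM[where I=I and M'="\<lambda>_. borel" and X=X] X_rv
    by (simp add: I_def \<mu>_def insert_commute)
  interpret product_sigma_finite \<mu>
    unfolding product_sigma_finite_def \<mu>_def
    using prob_space_distr[OF X_rv] by (simp add: prob_space_imp_sigma_finite)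
  have measurable_Pi\<mu>: "f \<in> borel_measurable (Pi\<^sub>M J \<mu>)"
    if "f \<in> borel_measurable (Pi\<^sub>M J (\<lambda>_. borel))" for f :: "(nat \<Rightarrow> real) \<Rightarrow> ennreal" and J
    using that by (subst measurable_cong_sets[OF sets_PiM_cong refl]) (simp_all add: \<mu>_def)
  define \<Phi> where "\<Phi> x = F (x 0, x 1, x 2, x 3)" for x :: "nat \<Rightarrow> real"
  have \<Phi>_measurable: "\<Phi> \<in> borel_measurable (Pi\<^sub>M I \<mu>)"
    by (rule measurable_Pi\<mu>) (unfold \<Phi>_def I_def, measurable)
  have "(\<integral>\<^sup>+\<omega>. F (X 0 \<omega>, X 1 \<omega>, X 2 \<omega>, X 3 \<omega>) \<partial>M) = (\<integral>\<^sup>+\<omega>. \<Phi> (\<lambda>i\<in>I. X i \<omega>) \<partial>M)"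
    by (simp add: \<Phi>_def I_def)
  also have "\<dots> = (\<integral>\<^sup>+x. \<Phi> x \<partial>Pi\<^sub>M I \<mu>)"
    unfolding law[symmetric]
    by (rule nn_integral_distr[OF restrict_measurable, symmetric]) (unfold \<Phi>_def I_def, measurable)
  also have "\<dots> = (\<integral>\<^sup>+x2. \<integral>\<^sup>+x. F (x 0, x 1, x2, x 3) \<partial>Pi\<^sub>M {1, 0, 3} \<mu> \<partial>\<mu> 2)"
    using \<Phi>_measurable unfolding I_def
    by (subst product_nn_integral_insert_rev) (simp_all add: \<Phi>_def)
  also have "\<dots> = (\<integral>\<^sup>+x2. \<integral>\<^sup>+x1. \<integral>\<^sup>+x. F (x 0, x1, x2, x 3) \<partial>Pi\<^sub>M {0, 3} \<mu> \<partial>\<mu> 1 \<partial>\<mu> 2)"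
    by (intro nn_integral_cong, subst product_nn_integral_insert_rev) (simp_all add: measurable_Pi\<mu>)
  also have "\<dots> = (\<integral>\<^sup>+x2. \<integral>\<^sup>+x1. \<integral>\<^sup>+x0. \<integral>\<^sup>+x. F (x0, x1, x2, x 3) \<partial>Pi\<^sub>M {3} \<mu> \<partial>\<mu> 0 \<partial>\<mu> 1 \<partial>\<mu> 2)"
    by (intro nn_integral_cong, subst product_nn_integral_insert_rev) (simp_all add: measurable_Pi\<mu>)
  also have "\<dots> = (\<integral>\<^sup>+x2. \<integral>\<^sup>+x1. \<integral>\<^sup>+x0. \<integral>\<^sup>+x3. F (x0, x1, x2, x3) \<partial>\<mu> 3 \<partial>\<mu> 0 \<partial>\<mu> 1 \<partial>\<mu> 2)"
    by (intro nn_integral_cong product_nn_integral_singleton) (simp add: \<mu>_def)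
  finally show ?thesis
    by (simp only: \<mu>_def)
qed

lemma nn_integral_indep_polar_components:
  fixes M :: "'a measure" and V1 V2 R D :: "'a \<Rightarrow> real" and fR fD :: "real \<Rightarrow> ennreal"
    and h :: "real \<times> real \<Rightarrow> ennreal"
  assumes M: "prob_space M"
    and indep: "prob_space.indep_vars M (\<lambda>_. borel)
                  (\<lambda>i::nat. if i = 0 then V1 else if i = 1 then V2 else if i = 2 then R else D)
                  {0, 1, 2, 3}"
    and V1: "rademacher_var M V1" and V2: "rademacher_var M V2"
    and D_distr: "distributed M lborel D fD"
    and R_distr: "distributed M lborel R fR"
    and [measurable]: "h \<in> borel_measurable (borel \<Otimes>\<^sub>M borel)"
  shows "(\<integral>\<^sup>+\<omega>. h (R \<omega> * D \<omega> * V1 \<omega>, R \<omega> * sqrt (1 - (D \<omega>)\<^sup>2) * V2 \<omega>) \<partial>M)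
       = (\<integral>\<^sup>+r. fR r * rademacher_mean (\<lambda>w. rademacher_mean (\<lambda>v.
                \<integral>\<^sup>+d. fD d * h (r * d * v, r * sqrt (1 - d\<^sup>2) * w) \<partial>lborel)) \<partial>lborel)"
proof -
  interpret prob_space M by (fact M)
  have [measurable]: "V1 \<in> borel_measurable M" "V2 \<in> borel_measurable M"
    "R \<in> borel_measurable M" "D \<in> borel_measurable M"
    using V1 V2 distributed_measurable[OF R_distr] distributed_measurable[OF D_distr]
    by (simp_all add: rademacher_var_def)
  note [measurable] =
    distributed_borel_measurable[OF R_distr] distributed_borel_measurable[OF D_distr]
  define X where "X = (\<lambda>i::nat. if i = 0 then V1 else if i = 1 then V2 else if i = 2 then R else D)"
  have X_rv: "random_variable borel (X i)" for i
    unfolding X_def by simp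
  have sign_law: "(\<integral>\<^sup>+v. F v \<partial>distr M borel (X i)) = rademacher_mean F"
    if "i \<in> {0, 1}" "F \<in> borel_measurable borel" for i F
    using that nn_integral_rademacher[OF M V1, of F] nn_integral_rademacher[OF M V2, of F]
    by (auto simp: X_def nn_integral_distr)
  have "distr M borel Y = distr M lborel Y" for Y :: "'a \<Rightarrow> real"
    by (rule distr_cong) simp_all
  then have R_law: "distr M borel (X 2) = density lborel fR"
    and D_law: "distr M borel (X 3) = density lborel fD"
    using distributed_distr_eq_density[OF R_distr] distributed_distr_eq_density[OF D_distr]
    by (simp_all add: X_def)
  define A where "A r v w = (\<integral>\<^sup>+d. fD d * h (r * d * v, r * sqrt (1 - d\<^sup>2) * w) \<partial>lborel)" for r v w
  have [measurable]: "(\<lambda>r. A r v w) \<in> borel_measurable borel"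
    "(\<lambda>(v, w). A r v w) \<in> borel_measurable (borel \<Otimes>\<^sub>M borel)"
    for r v w unfolding A_def by measurable
  have "(\<integral>\<^sup>+\<omega>. h (R \<omega> * D \<omega> * V1 \<omega>, R \<omega> * sqrt (1 - (D \<omega>)\<^sup>2) * V2 \<omega>) \<partial>M)
      = (\<integral>\<^sup>+r. \<integral>\<^sup>+w. \<integral>\<^sup>+v. \<integral>\<^sup>+d. h (r * d * v, r * sqrt (1 - d\<^sup>2) * w)
            \<partial>distr M borel (X 3) \<partial>distr M borel (X 0) \<partial>distr M borel (X 1) \<partial>distr M borel (X 2))"
    using nn_integral_indep_vars_4[of X "\<lambda>(v, w, r, d). h (r * d * v, r * sqrt (1 - d\<^sup>2) * w)"]
      indep X_rv by (simp add: X_def)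
  also have "\<dots> = (\<integral>\<^sup>+r. rademacher_mean (\<lambda>w. rademacher_mean (\<lambda>v. A r v w)) \<partial>density lborel fR)"
  proof (unfold R_law, intro nn_integral_cong)
    fix r :: real
    have "(\<lambda>w. rademacher_mean (\<lambda>v. A r v w)) \<in> borel_measurable borel"
      unfolding rademacher_mean_def by measurable
    then show "(\<integral>\<^sup>+w. \<integral>\<^sup>+v. \<integral>\<^sup>+d. h (r * d * v, r * sqrt (1 - d\<^sup>2) * w)
            \<partial>distr M borel (X 3) \<partial>distr M borel (X 0) \<partial>distr M borel (X 1))
        = rademacher_mean (\<lambda>w. rademacher_mean (\<lambda>v. A r v w))"
      by (simp add: D_law nn_integral_density A_def sign_law)
  qed
  also have "\<dots> = (\<integral>\<^sup>+r. fR r * rademacher_mean (\<lambda>w. rademacher_mean (\<lambda>v. A r v w)) \<partial>lborel)"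
    by (rule nn_integral_density) (unfold rademacher_mean_def, measurable)
  finally show ?thesis
    by (simp only: A_def)
qed

lemma distributedI_nn_integral_indicator:
  assumes X: "X \<in> measurable M N" and [measurable]: "f \<in> borel_measurable N"
    and indicator: "\<And>A. A \<in> sets N \<Longrightarrow> (\<integral>\<^sup>+\<omega>. indicator A (X \<omega>) \<partial>M) = (\<integral>\<^sup>+x. f x * indicator A x \<partial>N)"
  shows "distributed M N X f"
  unfolding distributed_def
proof (intro conjI measure_eqI)
  fix A assume "A \<in> sets (distr M N X)"
  then have [measurable]: "A \<in> sets N" by simp
  have "emeasure (distr M N X) A = (\<integral>\<^sup>+\<omega>. indicator A (X \<omega>) \<partial>M)"
    using X by (simp add: nn_integral_distr[symmetric])
  then show "emeasure (distr M N X) A = emeasure (density N f) A"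
    by (simp add: indicator emeasure_density)
qed (use X in simp_all)

lemma distributed_random_polar_vector:
  fixes M :: "'a measure" and V1 V2 R D :: "'a \<Rightarrow> real" and q :: "real \<Rightarrow> real"
  assumes M: "prob_space M"
    and indep: "prob_space.indep_vars M (\<lambda>_. borel)
                  (\<lambda>i::nat. if i = 0 then V1 else if i = 1 then V2 else if i = 2 then R else D)
                  {0, 1, 2, 3}"
    and V1: "rademacher_var M V1" and V2: "rademacher_var M V2"
    and D_distr: "distributed M lborel D
       (\<lambda>d. ennreal (half_arcsine_density d))"
    and R_distr: "distributed M lborel R (\<lambda>r. ennreal (radial_density q r))"
    and [measurable]: "q \<in> borel_measurable borel" and q_nonneg: "\<And>u. 0 \<le> q u"
  shows "distributed M (lborel \<Otimes>\<^sub>M lborel)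
           (\<lambda>\<omega>. (R \<omega> * D \<omega> * V1 \<omega>, R \<omega> * sqrt (1 - (D \<omega>)\<^sup>2) * V2 \<omega>))
           (\<lambda>p. ennreal (q ((fst p)\<^sup>2 + (snd p)\<^sup>2) / pi))"
proof (rule distributedI_nn_integral_indicator)
  have "V1 \<in> borel_measurable M" "V2 \<in> borel_measurable M"
    "R \<in> borel_measurable M" "D \<in> borel_measurable M"
    using V1 V2 distributed_measurable[OF R_distr] distributed_measurable[OF D_distr]
    by (simp_all add: rademacher_var_def)
  then show "(\<lambda>\<omega>. (R \<omega> * D \<omega> * V1 \<omega>, R \<omega> * sqrt (1 - (D \<omega>)\<^sup>2) * V2 \<omega>))
      \<in> measurable M (lborel \<Otimes>\<^sub>M lborel)"
    by measurable
next
  fix A :: "(real \<times> real) set" assume "A \<in> sets (lborel \<Otimes>\<^sub>M lborel)"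
  then have "indicator A \<in> borel_measurable (borel \<Otimes>\<^sub>M borel)"
    by (simp add: sets_pair_measure_cong[of lborel borel lborel borel])
  then show "(\<integral>\<^sup>+\<omega>. indicator A (R \<omega> * D \<omega> * V1 \<omega>, R \<omega> * sqrt (1 - (D \<omega>)\<^sup>2) * V2 \<omega>) \<partial>M)
      = (\<integral>\<^sup>+p. ennreal (q ((fst p)\<^sup>2 + (snd p)\<^sup>2) / pi) * indicator A p \<partial>(lborel \<Otimes>\<^sub>M lborel))"
    using nn_integral_indep_polar_components[OF assms(1-6)] nn_integral_random_polar_vector[of q]
      q_nonneg
    by simp
qed measurable

theorem proposition2:
  fixes M :: "'a measure"
    and g :: "real \<Rightarrow> real" and K :: real
    and V1 V2 R D :: "'a \<Rightarrow> real"
  assumes "prob_space M"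
    and g_meas: "set_borel_measurable lborel {0..} g"
    and g_nonneg: "\<And>u. u \<ge> 0 \<Longrightarrow> g u \<ge> 0"
    and g_int: "set_integrable lborel {0..} g"
    and K_def: "K = (LBINT u:{0..}. g u)"
    and K_pos: "0 < K"
    and indep: "prob_space.indep_vars M (\<lambda>_. borel)
                  (\<lambda>i::nat. if i = 0 then V1 else if i = 1 then V2 else if i = 2 then R else D)
                  {0, 1, 2, 3}"
    and V1_rv: "V1 \<in> borel_measurable M"
    and V2_rv: "V2 \<in> borel_measurable M"
    and V1_m: "measure M {\<omega> \<in> space M. V1 \<omega> = -1} = 1/2"
    and V1_p: "measure M {\<omega> \<in> space M. V1 \<omega> = 1} = 1/2"
    and V2_m: "measure M {\<omega> \<in> space M. V2 \<omega> = -1} = 1/2"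
    and V2_p: "measure M {\<omega> \<in> space M. V2 \<omega> = 1} = 1/2"
    and D_distr: "distributed M lborel D
       (\<lambda>d. ennreal (if 0 < d \<and> d < 1 then 2 / (pi * sqrt (1 - d\<^sup>2)) else 0))"
    and R_distr: "distributed M lborel R
       (\<lambda>r. ennreal (if 0 < r then 2 * r * g (r\<^sup>2) / K else 0))"
  shows "\<exists>f :: real \<times> real \<Rightarrow> ennreal.
           distributed M (lborel \<Otimes>\<^sub>M lborel)
             (\<lambda>\<omega>. (R \<omega> * D \<omega> * V1 \<omega>, R \<omega> * sqrt (1 - (D \<omega>)\<^sup>2) * V2 \<omega>)) f
           \<and> (\<forall>x y. f (x, y) = f (x, - y) \<and> f (x, y) = f (- x, y) \<and> f (x, y) = f (- x, - y))"
proof -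
  define q where "q = (\<lambda>u. indicator {0..} u * g u / K)"
  have "(\<lambda>u. indicator {0..} u * g u) \<in> borel_measurable borel"
    using g_meas by (simp add: set_borel_measurable_def)
  then have q_measurable: "q \<in> borel_measurable borel"
    unfolding q_def by (rule borel_measurable_divide) simp
  have q_nonneg: "0 \<le> q u" for u
    using g_nonneg K_pos by (simp add: q_def indicator_def)
  have "(\<lambda>r. ennreal (radial_density q r))
      = (\<lambda>r. ennreal (if 0 < r then 2 * r * g (r\<^sup>2) / K else 0))"
    by (simp add: fun_eq_iff radial_density_def q_def)
  with R_distr have R_distr_q: "distributed M lborel R (\<lambda>r. ennreal (radial_density q r))"
    by simp
  have V: "rademacher_var M V1" "rademacher_var M V2"
    using V1_rv V1_m V1_p V2_rv V2_m V2_p by (simp_all add: rademacher_var_def)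
  from distributed_random_polar_vector[OF assms(1) indep V D_distr[folded half_arcsine_density_def]
      R_distr_q q_measurable q_nonneg]
  show ?thesis
    by (intro exI[of _ "\<lambda>p. ennreal (q ((fst p)\<^sup>2 + (snd p)\<^sup>2) / pi)"]) simp
qed

end
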